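(* Let $n$ be an odd integer. If an edge-coloring of a complete graph contains no rainbow $n$-cycle, then it contains no rainbow $m$-cycle for every integer $m \ge n^3/2$.
   Context: A coloring is an arbitrary (not necessarily proper) assignment of colors, from an arbitrary set, to the edges of an undirected complete graph; the graph may be finite or infinite. A rainbow $n$-cycle is a cycle through $n$ distinct vertices whose $n$ edges all receive pairwise distinct colors. *)

theory Defs
  imports Main
begin

text \<open>An edge-coloring of the complete graph on vertex type 'v is any function c from
  edges (two-element vertex sets) to colours; only its values on sets {u,v} with u \<noteq> v matter.\<close>

definition rainbow_cycle :: "('v set \<Rightarrow> 'c) \<Rightarrow> nat \<Rightarrow> 'v list \<Rightarrow> bool" where
  "rainbow_cycle c n vs \<longleftrightarrow>
     n \<ge> 3 \<and> length vs = n \<and> distinct vs \<and>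
     inj_on (\<lambda>i. c {vs ! i, vs ! ((i + 1) mod n)}) {..<n}"

definition has_rainbow_cycle :: "('v set \<Rightarrow> 'c) \<Rightarrow> nat \<Rightarrow> bool" where
  "has_rainbow_cycle c n \<longleftrightarrow> (\<exists>vs. rainbow_cycle c n vs)"

end

theory Submission
  imports Defs
begin

text \<open>Let v_0, ..., v_(L-1) be a rainbow cycle. If there is no rainbow (k+1)-cycle, the colour
  of a chord v_b v_(b+k) must occur on the arc v_b ... v_(b+k), since otherwise the arc closed by
  the chord would be one. Applying this to both arcs cut off by a single chord shows that the
  lengths p admitting no rainbow p-cycle are closed under (p, q) \<mapsto> p + q - 2.

  For n = 2a+1 and L = na consider the chords v_(ja) v_((j+2)a). The colour of each of them occurs
  on the first or on the second half of its arc. If chord j takes its colour from the first half,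
  so does chord j+1: otherwise the two crossing chords close a rainbow (L-2a+2)-cycle, a length
  already excluded by additivity. By periodicity all chords take their colours from the same
  half, so these colours are distinct, and the star polygon v_0 v_(2a) v_(4a) ... is a rainbow
  n-cycle. Hence length na is excluded as well. The excluded lengths minus 2 thus form an
  additive semigroup containing n-2 and na-2, where na-2 is -1 modulo n-2; such a semigroup
  contains every number from (n-2)(na-2) on, and this bound is below n^3/2 - 2.\<close>

lemma inj_on_mod_interval: "inj_on (\<lambda>x::nat. x mod L) {b..<b + L}"
proof (rule inj_onI)
  have close: "x = y" if le: "x \<le> y" and less: "y < x + L" and eq: "x mod L = y mod L" for x y :: nat
  proof -
    obtain s where s: "y = x + L * s" using eq le by (rule mod_eq_nat2E)
    with less have "L * s < L * 1" by simp
    then have "s = 0" by (simp only: mult_less_cancel1) simp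
    with s show ?thesis by simp
  qed
  fix x y assume "x \<in> {b..<b + L}" "y \<in> {b..<b + L}" "x mod L = y mod L"
  then show "x = y" using close[of x y] close[of y x] by (cases "x \<le> y") auto
qed

lemma inj_on_double_mod:
  fixes n :: nat
  assumes "odd n"
  shows "inj_on (\<lambda>i. 2 * i mod n) {..<n}"
proof (rule inj_onI)
  define h where "h = (n + 1) div 2"
  have halve: "i mod n = h * (2 * i mod n) mod n" for i
  proof -
    have "2 * h = n + 1" using assms unfolding h_def by simp
    then have "h * (2 * i) = i + n * i" by (metis mult.assoc mult.commute mult_Suc_right Suc_eq_plus1)
    then show ?thesis by (simp add: mod_mult_right_eq)
  qed
  fix i j assume "i \<in> {..<n}" "j \<in> {..<n}" "2 * i mod n = 2 * j mod n"
  then show "i = j" using halve[of i] halve[of j] by simp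
qed

lemma nat_combination_of_dvd_Suc:
  fixes d e x :: nat
  assumes "0 < d" and "d dvd e + 1" and "d * e \<le> x"
  shows "\<exists>i j. x = (i + 1) * e + j * d"
proof -
  define i where "i = d - 1 - x mod d"
  have x_mod: "x mod d < d" using assms(1) by simp
  then have i_eq: "i + 1 = d - x mod d" unfolding i_def by linarith
  have "x + (i + 1) = x div d * d + d" using i_eq x_mod div_mult_mod_eq[of x d] by linarith
  then have "d dvd x + (i + 1)" by simp
  moreover have "d dvd (i + 1) * (e + 1)" using assms(2) by (rule dvd_mult)
  then have "d dvd (i + 1) * e + (i + 1)" by (simp add: algebra_simps)
  ultimately have "d dvd (x + (i + 1)) - ((i + 1) * e + (i + 1))" by (rule dvd_diff_nat)
  then have "d dvd x - (i + 1) * e" by simp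
  then obtain j where "x - (i + 1) * e = d * j" by (rule dvdE)
  moreover have "(i + 1) * e \<le> x" using i_eq assms(3) by (metis diff_le_self mult_le_mono1 order_trans)
  ultimately have "x = (i + 1) * e + d * j" by linarith
  then show ?thesis by (metis mult.commute)
qed

lemma has_rainbow_cycleI:
  assumes "3 \<le> M" and "inj_on w {..<M}"
    and "inj_on (\<lambda>i. c {w i, w ((i + 1) mod M)}) {..<M}"
  shows "has_rainbow_cycle c M"
proof -
  let ?ws = "map w [0..<M]"
  have "M > 0" using assms(1) by simp
  then have "inj_on (\<lambda>i. c {?ws ! i, ?ws ! ((i + 1) mod M)}) {..<M}
    \<longleftrightarrow> inj_on (\<lambda>i. c {w i, w ((i + 1) mod M)}) {..<M}"
    by (intro inj_on_cong) simp
  then have "inj_on (\<lambda>i. c {?ws ! i, ?ws ! ((i + 1) mod M)}) {..<M}" using assms(3) by simp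
  moreover have "distinct ?ws" using assms(2) by (simp add: distinct_map atLeast0LessThan)
  ultimately have "rainbow_cycle c M ?ws" using assms(1) unfolding rainbow_cycle_def by simp
  then show ?thesis unfolding has_rainbow_cycle_def ..
qed

locale host_cycle =
  fixes c :: "'v set \<Rightarrow> 'c" and L :: nat and vs :: "'v list"
  assumes rainbow: "rainbow_cycle c L vs"
begin

definition node :: "nat \<Rightarrow> 'v" where
  "node t = vs ! (t mod L)"

definition edge_colour :: "nat \<Rightarrow> 'c" where
  "edge_colour t = c {node t, node (t + 1)}"

lemma L_ge_3: "3 \<le> L"
  using rainbow by (simp add: rainbow_cycle_def)

lemma node_eq_iff: "node x = node y \<longleftrightarrow> x mod L = y mod L"
  using rainbow L_ge_3 unfolding node_def rainbow_cycle_def by (simp add: nth_eq_iff_index_eq)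

lemma edge_colour_eq_iff: "edge_colour x = edge_colour y \<longleftrightarrow> x mod L = y mod L"
proof -
  have L_pos: "0 < L" using L_ge_3 by simp
  have colour: "edge_colour t = c {vs ! (t mod L), vs ! ((t mod L + 1) mod L)}" for t
    unfolding edge_colour_def node_def by (simp add: mod_Suc_eq)
  have "inj_on (\<lambda>i. c {vs ! i, vs ! ((i + 1) mod L)}) {..<L}"
    using rainbow by (simp add: rainbow_cycle_def)
  then have "edge_colour x = edge_colour y \<Longrightarrow> x mod L = y mod L"
    unfolding colour by (rule inj_onD) (simp_all add: L_pos)
  then show ?thesis unfolding colour by auto
qed

lemma node_add_L [simp]: "node (t + L) = node t"
  by (simp add: node_def)

lemma node_add_mult_L [simp]: "node (t + k * L) = node t"
  by (simp add: node_def)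

lemma edge_colour_add_mult_L [simp]: "edge_colour (t + k * L) = edge_colour t"
  by (simp add: edge_colour_eq_iff)

lemma edge_colour_image_shift: "edge_colour ` {x + k * L..<y + k * L} = edge_colour ` {x..<y}"
proof -
  have "edge_colour ` {x + k * L..<y + k * L} = edge_colour ` (\<lambda>t. t + k * L) ` {x..<y}"
    by (simp only: image_add_atLeastLessThan')
  also have "\<dots> = edge_colour ` {x..<y}"
    by (simp only: image_image edge_colour_add_mult_L)
  finally show ?thesis .
qed

lemma inj_on_node: "inj_on node {b..<b + L}"
  using inj_on_mod_interval unfolding inj_on_def node_eq_iff .

lemma inj_on_edge_colour: "inj_on edge_colour {b..<b + L}"
  using inj_on_mod_interval unfolding inj_on_def edge_colour_eq_iff .

lemma has_rainbow_cycle_through_nodes: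
  assumes "3 \<le> M" and "inj_on \<tau> {..<M}" and "\<tau> ` {..<M} \<subseteq> {b..<b + L}"
    and "inj_on (\<lambda>i. c {node (\<tau> i), node (\<tau> ((i + 1) mod M))}) {..<M}"
  shows "has_rainbow_cycle c M"
proof (rule has_rainbow_cycleI[where w = "node \<circ> \<tau>"])
  have "inj_on node (\<tau> ` {..<M})" using inj_on_node assms(3) by (rule inj_on_subset)
  with assms(2) show "inj_on (node \<circ> \<tau>) {..<M}" by (rule comp_inj_on)
qed (use assms in simp_all)

lemma inj_on_through_edge_colours:
  assumes "\<And>i. i < M \<Longrightarrow> f i = edge_colour (\<sigma> i)"
    and "inj_on \<sigma> {..<M}" and "\<sigma> ` {..<M} \<subseteq> {b..<b + L}"
  shows "inj_on f {..<M}"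
proof -
  have "inj_on edge_colour (\<sigma> ` {..<M})" using inj_on_edge_colour assms(3) by (rule inj_on_subset)
  with assms(2) have "inj_on (edge_colour \<circ> \<sigma>) {..<M}" by (rule comp_inj_on)
  then show ?thesis by (rule inj_on_cong[THEN iffD1, rotated]) (simp add: assms(1))
qed

lemma chord_colour_in_short_arc:
  assumes "2 \<le> k" and "k < L" and "\<not> has_rainbow_cycle c (k + 1)"
  shows "c {node b, node (b + k)} \<in> edge_colour ` {b..<b + k}"
proof (rule ccontr)
  assume chord: "c {node b, node (b + k)} \<notin> edge_colour ` {b..<b + k}"
  define f where "f i = c {node (b + i), node (b + (i + 1) mod (k + 1))}" for i
  have f_arc: "f i = edge_colour (b + i)" if "i < k" for i
    using that unfolding f_def edge_colour_def by simp
  have "f ` {..<k} \<subseteq> edge_colour ` {b..<b + k}" using f_arc by auto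
  moreover have "f k \<notin> edge_colour ` {b..<b + k}"
    using chord unfolding f_def by (simp add: insert_commute)
  ultimately have "f k \<notin> f ` {..<k}" by (rule contra_subsetD)
  moreover have "inj_on f {..<k}"
    by (rule inj_on_through_edge_colours[where b = b, OF f_arc]) (use assms(2) in auto)
  ultimately have "inj_on f {..<k + 1}" by (simp add: lessThan_Suc)
  then have "has_rainbow_cycle c (k + 1)"
    unfolding f_def using assms(1,2)
    by (intro has_rainbow_cycle_through_nodes[where \<tau> = "\<lambda>i. b + i" and b = b]) auto
  with assms(3) show False ..
qed

lemma chord_colour_in_long_arc:
  assumes "2 \<le> k" and "k + 2 \<le> L" and "\<not> has_rainbow_cycle c (L - k + 1)"
  shows "c {node b, node (b + k)} \<in> edge_colour ` {b + k..<b + L}"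
proof -
  have "c {node (b + k), node (b + k + (L - k))} \<in> edge_colour ` {b + k..<b + k + (L - k)}"
    by (rule chord_colour_in_short_arc) (use assms in auto)
  moreover have "b + k + (L - k) = b + L" using assms(2) by simp
  ultimately show ?thesis by (simp add: insert_commute)
qed

lemma crossing_chord_colours:
  assumes "1 \<le> a" and "3 * a < L" and "\<not> has_rainbow_cycle c (L - 2 * a + 2)"
    and "c {node b, node (b + 2 * a)} \<in> edge_colour ` {b..<b + a}"
  shows "c {node (b + a), node (b + 3 * a)} \<notin> edge_colour ` {b + 2 * a..<b + 3 * a}"
proof
  assume "c {node (b + a), node (b + 3 * a)} \<in> edge_colour ` {b + 2 * a..<b + 3 * a}"
  then obtain s' where s': "s' \<in> {b + 2 * a..<b + 3 * a}"
    and colour': "c {node (b + a), node (b + 3 * a)} = edge_colour s'" by auto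
  obtain s where s: "s \<in> {b..<b + a}" and colour: "c {node b, node (b + 2 * a)} = edge_colour s"
    using assms(4) by auto
  define M where "M = L - 2 * a + 2"
  \<comment> \<open>\<tau> walks from node b over the first chord, back down the arc to node b+a, over the
    second chord and on to node b+L-1; \<sigma> names an edge of the host cycle with the same colour
    for each step, the chords borrowing the edges s and s' of the two skipped arcs.\<close>
  define \<tau> where "\<tau> i = (if i = 0 then b else if i \<le> a + 1 then b + 2 * a + 1 - i else b + i + 2 * a - 2)"
    for i
  define \<sigma> where "\<sigma> i = (if i = 0 then s else if i \<le> a then b + 2 * a - i
    else if i = a + 1 then s' else b + i + 2 * a - 2)" for i
  have M_ge_3: "3 \<le> M" using assms(1,2) M_def by simp
  have "inj_on \<tau> {..<M}" and "\<tau> ` {..<M} \<subseteq> {b..<b + L}"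
    unfolding inj_on_def \<tau>_def using M_def assms(1,2) by auto
  moreover have "inj_on \<sigma> {..<M}" and "\<sigma> ` {..<M} \<subseteq> {b..<b + L}"
    unfolding inj_on_def \<sigma>_def using M_def assms(1,2) s s' by auto
  moreover have "c {node (\<tau> i), node (\<tau> ((i + 1) mod M))} = edge_colour (\<sigma> i)" if "i < M" for i
  proof -
    consider "i = 0" | "1 \<le> i" "i \<le> a" | "i = a + 1" | "a + 2 \<le> i" "i + 1 < M" | "i + 1 = M"
      using \<open>i < M\<close> by linarith
    then show ?thesis
    proof cases
      case 1
      then show ?thesis using M_ge_3 colour by (simp add: \<tau>_def \<sigma>_def)
    next
      case 2
      then have "(i + 1) mod M = i + 1" using M_def assms(2) by simp
      moreover have "Suc (b + 2 * a - i) = b + 2 * a + 1 - i" using 2 by simp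
      ultimately show ?thesis using 2 by (simp add: \<tau>_def \<sigma>_def edge_colour_def insert_commute)
    next
      case 3
      then have "(i + 1) mod M = a + 2" using M_def assms(2) by simp
      moreover have "b + (a + 2) + 2 * a - 2 = b + 3 * a" by simp
      ultimately show ?thesis using 3 colour' by (simp add: \<tau>_def \<sigma>_def add.commute)
    next
      case 4
      then have "(i + 1) mod M = i + 1" by simp
      moreover have "b + (i + 1) + 2 * a - 2 = Suc (b + i + 2 * a - 2)" using 4 by simp
      ultimately show ?thesis using 4 by (simp add: \<tau>_def \<sigma>_def edge_colour_def)
    next
      case 5
      then have "\<tau> i = b + L - 1" "\<sigma> i = b + L - 1" "\<tau> ((i + 1) mod M) = b"
        using M_def assms(1,2) by (auto simp: \<tau>_def \<sigma>_def)
      moreover have "Suc (b + L - 1) = b + L" using assms(2) by simp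
      ultimately show ?thesis by (simp add: edge_colour_def insert_commute)
    qed
  qed
  ultimately have "has_rainbow_cycle c M"
    by (intro has_rainbow_cycle_through_nodes inj_on_through_edge_colours M_ge_3)
  with assms(3) show False unfolding M_def ..
qed

end

lemma no_rainbow_cycle_add:
  assumes "3 \<le> p" and "3 \<le> q"
    and "\<not> has_rainbow_cycle c p" and "\<not> has_rainbow_cycle c q"
  shows "\<not> has_rainbow_cycle c (p + q - 2)"
proof
  assume "has_rainbow_cycle c (p + q - 2)"
  then obtain vs where "rainbow_cycle c (p + q - 2) vs" unfolding has_rainbow_cycle_def ..
  then interpret host_cycle c "p + q - 2" vs by unfold_locales
  have "c {node 0, node (p - 1)} \<in> edge_colour ` {0..<p - 1}"
    using chord_colour_in_short_arc[of "p - 1" 0] assms by simp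
  moreover have "c {node 0, node (p - 1)} \<in> edge_colour ` {p - 1..<p + q - 2}"
    using chord_colour_in_long_arc[of "p - 1" 0] assms by (simp add: Suc_diff_le)
  ultimately obtain s s' where "s < p - 1" "p - 1 \<le> s'" "s' < p + q - 2"
    and "edge_colour s = edge_colour s'" by force
  with inj_on_edge_colour[of 0] show False unfolding inj_on_def by force
qed

lemma no_rainbow_cycle_add_multiple:
  assumes "3 \<le> p" and "3 \<le> q"
    and "\<not> has_rainbow_cycle c p" and "\<not> has_rainbow_cycle c q"
  shows "\<not> has_rainbow_cycle c (p + k * (q - 2))"
proof (induction k)
  case (Suc k)
  have "\<not> has_rainbow_cycle c (p + k * (q - 2) + q - 2)"
    using no_rainbow_cycle_add[of "p + k * (q - 2)" q] Suc.IH assms by simp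
  moreover have "p + k * (q - 2) + q - 2 = p + Suc k * (q - 2)" using assms(2) by simp
  ultimately show ?case by simp
qed (use assms in simp)

locale star_chords = host_cycle c L vs for c :: "'v set \<Rightarrow> 'c" and L vs +
  fixes a :: nat
  assumes a_ge_2: "2 \<le> a"
    and L_eq: "L = (2 * a + 1) * a"
    and no_rainbow_odd: "\<not> has_rainbow_cycle c (2 * a + 1)"
    and no_rainbow_short: "\<not> has_rainbow_cycle c (L - 2 * a + 2)"
begin

definition chord_colour :: "nat \<Rightarrow> 'c" where
  "chord_colour j = c {node (j * a), node ((j + 2) * a)}"

definition left_half :: "nat \<Rightarrow> bool" where
  "left_half j \<longleftrightarrow> chord_colour j \<in> edge_colour ` {j * a..<j * a + a}"

definition right_half :: "nat \<Rightarrow> bool" where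
  "right_half j \<longleftrightarrow> chord_colour j \<in> edge_colour ` {j * a + a..<j * a + 2 * a}"

lemma five_a_le_L: "5 * a \<le> L"
  unfolding L_eq using a_ge_2 by (intro mult_le_mono1) simp

lemma left_half_or_right_half: "left_half j \<or> right_half j"
proof -
  have "(j + 2) * a = j * a + 2 * a" by (simp add: algebra_simps)
  then have "chord_colour j = c {node (j * a), node (j * a + 2 * a)}"
    unfolding chord_colour_def by (simp only:)
  also have "\<dots> \<in> edge_colour ` {j * a..<j * a + 2 * a}"
    by (rule chord_colour_in_short_arc) (use a_ge_2 five_a_le_L no_rainbow_odd in auto)
  also have "{j * a..<j * a + 2 * a} = {j * a..<j * a + a} \<union> {j * a + a..<j * a + 2 * a}"
    by auto
  finally show ?thesis unfolding left_half_def right_half_def image_Un by blast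
qed

lemma not_right_half_Suc: "left_half j \<Longrightarrow> \<not> right_half (Suc j)"
proof
  assume "left_half j" and "right_half (Suc j)"
  have shifts: "(j + 2) * a = j * a + 2 * a" "Suc j * a = j * a + a" "(Suc j + 2) * a = j * a + 3 * a"
    "j * a + a + a = j * a + 2 * a" "j * a + a + 2 * a = j * a + 3 * a"
    by (simp_all add: algebra_simps)
  have "1 \<le> a" and "3 * a < L" using a_ge_2 five_a_le_L by linarith+
  moreover have "c {node (j * a), node (j * a + 2 * a)} \<in> edge_colour ` {j * a..<j * a + a}"
    using \<open>left_half j\<close> unfolding left_half_def chord_colour_def shifts .
  moreover have "c {node (j * a + a), node (j * a + 3 * a)}
      \<in> edge_colour ` {j * a + 2 * a..<j * a + 3 * a}"
    using \<open>right_half (Suc j)\<close> unfolding right_half_def chord_colour_def shifts .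
  ultimately show False using crossing_chord_colours no_rainbow_short by blast
qed

lemma left_half_add: "left_half j \<Longrightarrow> left_half (j + t)"
  by (induction t) (use left_half_or_right_half not_right_half_Suc in auto)

lemma left_half_add_period: "left_half (j + k * (2 * a + 1)) \<longleftrightarrow> left_half j"
proof -
  have shift: "(j + k * (2 * a + 1)) * a = j * a + k * L"
    "(j + k * (2 * a + 1) + 2) * a = (j + 2) * a + k * L"
    "j * a + k * L + a = j * a + a + k * L"
    unfolding L_eq by (simp_all add: algebra_simps)
  then have "chord_colour (j + k * (2 * a + 1)) = chord_colour j"
    unfolding chord_colour_def shift(1,2) by simp
  then show ?thesis unfolding left_half_def shift edge_colour_image_shift by simp
qed

lemma all_left_half_or_all_right_half: "(\<forall>j. left_half j) \<or> (\<forall>j. right_half j)"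
proof (cases "\<exists>j. left_half j")
  case True
  then obtain j0 where j0: "left_half j0" ..
  have "left_half j" for j
  proof -
    have "j0 \<le> j + j0 * (2 * a + 1)" by simp
    then have "left_half (j + j0 * (2 * a + 1))"
      using left_half_add[OF j0] by (metis le_add_diff_inverse)
    then show ?thesis by (simp only: left_half_add_period)
  qed
  then show ?thesis by blast
next
  case False
  then show ?thesis using left_half_or_right_half by blast
qed

lemma inj_on_chord_colour:
  assumes "\<And>j. chord_colour j \<in> edge_colour ` {j * a + off..<j * a + off + a}"
  shows "inj_on chord_colour {..<2 * a + 1}"
proof (rule inj_onI)
  fix i j assume i: "i \<in> {..<2 * a + 1}" and j: "j \<in> {..<2 * a + 1}"
    and eq: "chord_colour i = chord_colour j"
  obtain s where s: "s \<in> {i * a + off..<i * a + off + a}" "chord_colour i = edge_colour s"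
    using assms by blast
  obtain s' where s': "s' \<in> {j * a + off..<j * a + off + a}" "chord_colour j = edge_colour s'"
    using assms by blast
  have "Suc i * a \<le> L" "Suc j * a \<le> L" using i j unfolding L_eq by (auto intro: mult_le_mono1)
  then have "s \<in> {off..<off + L}" "s' \<in> {off..<off + L}" using s(1) s'(1) by auto
  then have "s = s'" using eq s(2) s'(2) inj_on_edge_colour unfolding inj_on_def by metis
  have "(s - off) div a = i" "(s' - off) div a = j"
    using s(1) s'(1) by (auto intro!: div_nat_eqI simp: algebra_simps)
  with \<open>s = s'\<close> show "i = j" by simp
qed

lemma not_inj_on_chord_colour: "\<not> inj_on chord_colour {..<2 * a + 1}"
proof
  let ?n = "2 * a + 1"
  assume inj: "inj_on chord_colour {..<?n}"
  define \<tau> where "\<tau> i = (2 * i mod ?n) * a" for i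
  have double: "inj_on (\<lambda>i. 2 * i mod ?n) {..<?n}" by (rule inj_on_double_mod) simp
  have "inj_on \<tau> {..<?n}"
  proof (rule inj_onI)
    fix i j assume "i \<in> {..<?n}" "j \<in> {..<?n}" "\<tau> i = \<tau> j"
    then show "i = j" using inj_onD[OF double, of i j] a_ge_2 unfolding \<tau>_def by simp
  qed
  moreover have "\<tau> ` {..<?n} \<subseteq> {0..<0 + L}"
  proof -
    have "\<tau> i < L" for i
      unfolding \<tau>_def L_eq using a_ge_2 by (intro mult_less_mono1) simp_all
    then show ?thesis by auto
  qed
  moreover have "inj_on (\<lambda>i. c {node (\<tau> i), node (\<tau> ((i + 1) mod ?n))}) {..<?n}"
  proof -
    have "(2 * ((i + 1) mod ?n)) mod ?n = (2 * i mod ?n + 2) mod ?n" for i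
      unfolding mod_mult_right_eq mod_add_left_eq by simp
    then have "node (\<tau> ((i + 1) mod ?n)) = node ((2 * i mod ?n + 2) * a)" for i
      unfolding \<tau>_def node_eq_iff unfolding L_eq mod_mult_mult2 by simp
    then have colour: "c {node (\<tau> i), node (\<tau> ((i + 1) mod ?n))} = chord_colour (2 * i mod ?n)"
      for i unfolding \<tau>_def chord_colour_def by simp
    have "(\<lambda>i. 2 * i mod ?n) ` {..<?n} \<subseteq> {..<?n}" by auto
    then have "inj_on chord_colour ((\<lambda>i. 2 * i mod ?n) ` {..<?n})" by (rule inj_on_subset[OF inj])
    then have "inj_on (chord_colour \<circ> (\<lambda>i. 2 * i mod ?n)) {..<?n}" by (rule comp_inj_on[OF double])
    then show ?thesis unfolding colour comp_def .
  qed
  ultimately have "has_rainbow_cycle c ?n"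
    using a_ge_2 by (intro has_rainbow_cycle_through_nodes[where b = 0]) simp_all
  with no_rainbow_odd show False ..
qed

end

lemma no_rainbow_cycle_odd_mult:
  assumes "2 \<le> a" and "\<not> has_rainbow_cycle c (2 * a + 1)"
  shows "\<not> has_rainbow_cycle c ((2 * a + 1) * a)"
proof
  let ?L = "(2 * a + 1) * a"
  assume "has_rainbow_cycle c ?L"
  then obtain vs where "rainbow_cycle c ?L vs" unfolding has_rainbow_cycle_def ..
  moreover have "\<not> has_rainbow_cycle c (?L - 2 * a + 2)"
  proof -
    have "?L - 2 * a + 2 = (2 * a + 1) + (a - 1) * (2 * a + 1 - 2)"
      using assms(1) by (cases a) (simp_all add: algebra_simps)
    then show ?thesis
      using no_rainbow_cycle_add_multiple[of "2 * a + 1" "2 * a + 1" c "a - 1"] assms by simp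
  qed
  ultimately interpret star_chords c ?L vs a
    using assms by unfold_locales simp_all
  have "inj_on chord_colour {..<2 * a + 1}"
    using all_left_half_or_all_right_half
  proof
    assume "\<forall>j. left_half j"
    then have "chord_colour j \<in> edge_colour ` {j * a + 0..<j * a + 0 + a}" for j
      unfolding left_half_def by simp
    then show ?thesis by (rule inj_on_chord_colour)
  next
    assume "\<forall>j. right_half j"
    then have "chord_colour j \<in> edge_colour ` {j * a + a..<j * a + a + a}" for j
      unfolding right_half_def by (simp add: mult_2 add.assoc)
    then show ?thesis by (rule inj_on_chord_colour)
  qed
  with not_inj_on_chord_colour show False ..
qed

lemma no_rainbow_cycle_beyond_bound:
  assumes "3 \<le> p" and "3 \<le> q"
    and "\<not> has_rainbow_cycle c p" and "\<not> has_rainbow_cycle c q"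
    and "q - 2 dvd (p - 2) + 1" and "(q - 2) * (p - 2) + 2 \<le> m"
  shows "\<not> has_rainbow_cycle c m"
proof -
  have "0 < q - 2" and "(q - 2) * (p - 2) \<le> m - 2" using assms(2,6) by simp_all
  with assms(5) obtain i j where m: "m - 2 = (i + 1) * (p - 2) + j * (q - 2)"
    using nat_combination_of_dvd_Suc by blast
  have "(i + 1) * (p - 2) = (p - 2) + i * (p - 2)" by simp
  then have "m = p + i * (p - 2) + j * (q - 2)" using m assms(1) by linarith
  moreover have "\<not> has_rainbow_cycle c (p + i * (p - 2))"
    using no_rainbow_cycle_add_multiple assms(1,3) by blast
  then have "\<not> has_rainbow_cycle c (p + i * (p - 2) + j * (q - 2))"
    using no_rainbow_cycle_add_multiple[of "p + i * (p - 2)" q c j] assms(1,2,4) by simp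
  ultimately show ?thesis by simp
qed

theorem theorem8:
  fixes c :: "'v set \<Rightarrow> 'c" and n m :: nat
  assumes "odd n" and "n \<ge> 3"
    and "\<not> has_rainbow_cycle c n"
    and "2 * m \<ge> n ^ 3"
  shows "\<not> has_rainbow_cycle c m"
proof -
  obtain a where n: "n = 2 * a + 1" using \<open>odd n\<close> by (rule oddE)
  then have "1 \<le> a" using \<open>n \<ge> 3\<close> by simp
  then obtain b where a: "a = b + 1" by (metis add.commute le_Suc_ex)
  have "\<not> has_rainbow_cycle c (n * a)"
  proof (cases "a = 1")
    case True
    then show ?thesis using assms(3) by simp
  next
    case False
    then show ?thesis using no_rainbow_cycle_odd_mult[of a c] assms(3) \<open>1 \<le> a\<close> n by simp
  qed
  moreover have "3 \<le> n * a" using \<open>n \<ge> 3\<close> a by simp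
  moreover have "n - 2 dvd (n * a - 2) + 1"
  proof -
    have "(n * a - 2) + 1 = (n - 2) * (b + 2)" unfolding n a by (simp add: algebra_simps)
    then show ?thesis by (simp only: dvd_triv_left)
  qed
  moreover have "2 * ((n - 2) * (n * a - 2) + 2) \<le> n ^ 3"
    unfolding n a by (simp add: power3_eq_cube algebra_simps)
  then have "2 * ((n - 2) * (n * a - 2) + 2) \<le> 2 * m" using assms(4) by (rule order_trans)
  then have "(n - 2) * (n * a - 2) + 2 \<le> m" by simp
  ultimately show ?thesis using no_rainbow_cycle_beyond_bound assms(2,3) by blast
qed

end
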